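(* Let $\mathcal{A}$ be the augmented free tridendriform algebra on reduced planar trees, and let $\Delta:\mathcal{A}\to\mathcal{A}\otimes\mathcal{A}$ be the map such that $\Delta(|)=|\otimes|$ and whose restriction to $\mathcal{A}^+$ is the unique tridendriform algebra morphism $\mathcal{A}^+\to\mathcal{A}\overline{\otimes}\mathcal{A}$ with $\Delta(Y)=Y\otimes|+|\otimes Y$. For $x\in\mathcal A^+$ put $\tilde\Delta(x)=\Delta(x)-|\otimes x-x\otimes|$. Then for all $t,s\in\mathcal{A}^+$: $$\tilde\Delta(t\cdot s)=\tilde\Delta(t)\cdot\tilde\Delta(s)+(|\otimes t)\cdot\tilde\Delta(s)+\tilde\Delta(t)\cdot(|\otimes s),$$ $$\tilde\Delta(t\prec s)=s\otimes t+(|\otimes t)\prec\tilde\Delta(s)+\tilde\Delta(t)\prec(|\otimes s)+\tilde\Delta(t)*(s\otimes|)+\tilde\Delta(t)\prec\tilde\Delta(s),$$ $$\tilde\Delta(t\succ s)=t\otimes s+(|\otimes t)\succ\tilde\Delta(s)+(t\otimes|)*\tilde\Delta(s)+\tilde\Delta(t)\succ(|\otimes s)+\tilde\Delta(t)\succ\tilde\Delta(s),$$ where the products $\prec,\cdot,\succ$ of tensors are those of $\mathcal{A}\overline{\otimes}\mathcal{A}$ and $(a\otimes b)*(c\otimes d)=(a*c)\otimes(b*d)$.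
   Context: A tridendriform algebra over a field $\mathbb{K}$ is a vector space with products $\prec,\cdot,\succ$ such that, with $a*b=a\prec b+a\cdot b+a\succ b$: $(a\prec b)\prec c=a\prec(b*c)$, $(a\succ b)\prec c=a\succ(b\prec c)$, $(a*b)\succ c=a\succ(b\succ c)$, $(a\succ b)\cdot c=a\succ(b\cdot c)$, $(a\prec b)\cdot c=a\cdot(b\succ c)$, $(a\cdot b)\prec c=a\cdot(b\prec c)$, $(a\cdot b)\cdot c=a\cdot(b\cdot c)$. Trees: planar rooted trees in which every internal vertex has at least two children; the root vertex hangs from a trunk edge; leaves are the edges without upper vertex. $|$ is the tree with no internal vertex (one leaf). $T_n$ is the set of such trees with $n+1$ leaves, $\mathcal{A}=\bigoplus_{n\ge0}\mathbb{K}T_n$, $\mathcal{A}^+=\bigoplus_{n\ge1}\mathbb{K}T_n$. For trees $x_0,\dots,x_k$ ($k\ge1$), $x_0\vee\cdots\vee x_k$ is obtained by grafting them from left to right on a new root vertex; every tree $x\neq|$ is uniquely $x=x^{(0)}\vee\cdots\vee x^{(k)}$. $Y=|\vee|$. For trees $x=x^{(0)}\vee\cdots\vee x^{(k)}$, $y=y^{(0)}\vee\cdots\vee y^{(l)}$ in $\mathcal A^+$, recursively on the number of leaves: $x\prec y=x^{(0)}\vee\cdots\vee x^{(k-1)}\vee(x^{(k)}*y)$, $x\cdot y=x^{(0)}\vee\cdots\vee x^{(k-1)}\vee(x^{(k)}*y^{(0)})\vee y^{(1)}\vee\cdots\vee y^{(l)}$, $x\succ y=(x*y^{(0)})\vee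 y^{(1)}\vee\cdots\vee y^{(l)}$, where $*=\prec+\cdot+\succ$ and $|*z=z*|=z$. Then $\mathcal{A}^+$ is the free tridendriform algebra generated by $Y$ (Loday–Ronco), and $\mathcal A=\mathbb K|\oplus\mathcal A^+$ is its augmentation: $|$ is the unit of $*$ and for $a\in\mathcal A^+$: $|\prec a=0$, $a\prec|=a$, $|\succ a=a$, $a\succ|=0$, $|\cdot a=a\cdot|=0$. $\mathcal A\overline{\otimes}\mathcal A:=(\mathcal A^+\otimes\mathcal A^+)\oplus(\mathbb K|\otimes\mathcal A^+)\oplus(\mathcal A^+\otimes\mathbb K|)$, with products for $\ltimes\in\{\prec,\cdot,\succ\}$: $(a\otimes|)\ltimes(c\otimes|)=(a\ltimes c)\otimes|$ for $a,c\in\mathcal A^+$, and $(a\otimes b)\ltimes(c\otimes d)=(a*c)\otimes(b\ltimes d)$ when $b,d$ are not both $|$ (augmented conventions); it is a tridendriform algebra. *)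

theory Defs
  imports Main "HOL-Library.Poly_Mapping"
begin

text \<open>Leaf is the tree with no internal vertex (written | in the paper);
  Node [x0,...,xk] is x0 \<or> ... \<or> xk (grafting on a new root).\<close>
datatype tree = Leaf | Node "tree list"

fun reduced :: "tree \<Rightarrow> bool" where
  "reduced Leaf = True"
| "reduced (Node xs) = (2 \<le> length xs \<and> (\<forall>x\<in>set xs. reduced x))"

abbreviation Y :: tree where "Y \<equiv> Node [Leaf, Leaf]"

type_synonym 'k lc = "tree \<Rightarrow>\<^sub>0 'k"
type_synonym 'k tc = "(tree \<times> tree) \<Rightarrow>\<^sub>0 'k"

definition bil :: "('a \<Rightarrow> 'b \<Rightarrow> ('c \<Rightarrow>\<^sub>0 'k::field)) \<Rightarrow> ('a \<Rightarrow>\<^sub>0 'k) \<Rightarrow> ('b \<Rightarrow>\<^sub>0 'k) \<Rightarrow> ('c \<Rightarrow>\<^sub>0 'k)" where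
  "bil f p q = (\<Sum>u\<in>Poly_Mapping.keys p. \<Sum>v\<in>Poly_Mapping.keys q.
      Poly_Mapping.map (\<lambda>c. Poly_Mapping.lookup p u * Poly_Mapping.lookup q v * c) (f u v))"

definition scal :: "'k::field \<Rightarrow> ('a \<Rightarrow>\<^sub>0 'k) \<Rightarrow> ('a \<Rightarrow>\<^sub>0 'k)" where
  "scal k p = Poly_Mapping.map (\<lambda>c. k * c) p"

definition tens :: "'k::field lc \<Rightarrow> 'k lc \<Rightarrow> 'k tc" where
  "tens p q = (\<Sum>u\<in>Poly_Mapping.keys p. \<Sum>v\<in>Poly_Mapping.keys q. Poly_Mapping.single (u, v) (Poly_Mapping.lookup p u * Poly_Mapping.lookup q v))"

definition bar :: "'k::field lc" where "bar = Poly_Mapping.single Leaf 1"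

definition graft :: "tree list \<Rightarrow> 'k::field lc \<Rightarrow> tree list \<Rightarrow> 'k lc" where
  "graft pre c post = (\<Sum>u\<in>Poly_Mapping.keys c. Poly_Mapping.single (Node (pre @ [u] @ post)) (Poly_Mapping.lookup c u))"

datatype op = Prec | Dot | Succ | Star

function tri :: "op \<Rightarrow> tree \<Rightarrow> tree \<Rightarrow> 'k::field lc" where
  "tri Star Leaf v = Poly_Mapping.single v 1"
| "tri Star (Node xs) Leaf = Poly_Mapping.single (Node xs) 1"
| "tri Star (Node xs) (Node ys) =
     tri Prec (Node xs) (Node ys) + tri Dot (Node xs) (Node ys) + tri Succ (Node xs) (Node ys)"
| "tri Prec Leaf v = 0"
| "tri Prec (Node xs) Leaf = Poly_Mapping.single (Node xs) 1"
| "tri Prec (Node xs) (Node ys) =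
     (if xs = [] then 0 else graft (butlast xs) (tri Star (last xs) (Node ys)) [])"
| "tri Dot Leaf v = 0"
| "tri Dot (Node xs) Leaf = 0"
| "tri Dot (Node xs) (Node ys) =
     (if xs = [] \<or> ys = [] then 0
      else graft (butlast xs) (tri Star (last xs) (hd ys)) (tl ys))"
| "tri Succ Leaf v = Poly_Mapping.single v 1"
| "tri Succ (Node xs) Leaf = 0"
| "tri Succ (Node xs) (Node ys) =
     (if ys = [] then 0 else graft [] (tri Star (Node xs) (hd ys)) (tl ys))"
  by pat_completeness auto

lemma size_last_less: "xs \<noteq> [] \<Longrightarrow> size (last xs) < Suc (size_list size xs)"
  by (metis last_in_set less_Suc_eq_le size_list_estimation' order_refl)

lemma size_hd_less: "ys \<noteq> [] \<Longrightarrow> size (hd ys) < Suc (size_list size ys)"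
  by (metis hd_in_set less_Suc_eq_le size_list_estimation' order_refl)

lemma size_both_less: "xs \<noteq> [] \<Longrightarrow> ys \<noteq> [] \<Longrightarrow>
  size (last xs) + size (hd ys) < Suc (Suc (size_list size xs + size_list size ys))"
  using size_last_less[of xs] size_hd_less[of ys] by linarith

termination
  by (relation "measures [\<lambda>(r, u, v). size u + size v, \<lambda>(r, u, v). if r = Star then 1 else 0]")
     (auto simp: size_both_less size_last_less size_hd_less)

definition aop :: "op \<Rightarrow> 'k::field lc \<Rightarrow> 'k lc \<Rightarrow> 'k lc" where
  "aop r p q = bil (tri r) p q"

definition Aplus :: "'k::field lc \<Rightarrow> bool" where
  "Aplus p \<longleftrightarrow> (\<forall>u\<in>Poly_Mapping.keys p. reduced u \<and> u \<noteq> Leaf)"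

text \<open>Products of A \<otimes>bar A on basis tensors, for \<ltimes> in {Prec, Dot, Succ}:
  (a\<otimes>|) \<ltimes> (c\<otimes>|) = (a \<ltimes> c)\<otimes>|, and (a\<otimes>b) \<ltimes> (c\<otimes>d) = (a*c)\<otimes>(b \<ltimes> d) otherwise.
  For Star we use the componentwise product (a\<otimes>b)*(c\<otimes>d) = (a*c)\<otimes>(b*d).\<close>
definition tri2 :: "op \<Rightarrow> tree \<times> tree \<Rightarrow> tree \<times> tree \<Rightarrow> 'k::field tc" where
  "tri2 r x y = (case (x, y) of ((a, b), (c, d)) \<Rightarrow>
     if r = Star then tens (tri Star a c) (tri Star b d)
     else if b = Leaf \<and> d = Leaf then tens (tri r a c) bar
     else tens (tri Star a c) (tri r b d))"

definition tprod :: "op \<Rightarrow> 'k::field tc \<Rightarrow> 'k tc \<Rightarrow> 'k tc" where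
  "tprod r p q = bil (tri2 r) p q"

text \<open>A \<otimes>bar A: tensors with no |\<otimes>| component.\<close>
definition in_tbar :: "'k::field tc \<Rightarrow> bool" where
  "in_tbar p \<longleftrightarrow> (Leaf, Leaf) \<notin> Poly_Mapping.keys p"

definition is_Delta :: "('k::field lc \<Rightarrow> 'k tc) \<Rightarrow> bool" where
  "is_Delta D \<longleftrightarrow>
     (\<forall>p q. D (p + q) = D p + D q) \<and>
     (\<forall>k p. D (scal k p) = scal k (D p)) \<and>
     D bar = tens bar bar \<and>
     (\<forall>p. Aplus p \<longrightarrow> in_tbar (D p)) \<and>
     (\<forall>r\<in>{Prec, Dot, Succ}. \<forall>p q. Aplus p \<longrightarrow> Aplus q \<longrightarrow>
         D (aop r p q) = tprod r (D p) (D q)) \<and>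
     D (Poly_Mapping.single Y 1) =
       tens (Poly_Mapping.single Y 1) bar + tens bar (Poly_Mapping.single Y 1)"

definition Dtil :: "('k::field lc \<Rightarrow> 'k tc) \<Rightarrow> 'k lc \<Rightarrow> 'k tc" where
  "Dtil D x = D x - tens bar x - tens x bar"

end

theory Submission
  imports Defs
begin

text \<open>Write \<open>\<Delta>x = \<Delta>'x + |\<otimes>x + x\<otimes>|\<close> and expand the morphism property
  \<open>\<Delta>(t \<ltimes> s) = \<Delta>t \<ltimes> \<Delta>s\<close> into nine terms. Once \<open>\<Delta>'t\<close> and \<open>\<Delta>'s\<close> are known to
  lie in \<open>\<A>\<^sup>+ \<otimes> \<A>\<^sup>+\<close>, every term involving a unit tensor \<open>|\<otimes>x\<close> or
  \<open>x\<otimes>|\<close> is evaluated by the unit rules of the augmented algebra, and what remains are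
  the stated formulas. That \<open>\<Delta>'\<close> maps \<open>\<A>\<^sup>+\<close> into \<open>\<A>\<^sup>+ \<otimes> \<A>\<^sup>+\<close> is
  proved on trees by induction: \<open>\<Delta>'Y = 0\<close>, every reduced tree other than Y is a
  product of two smaller reduced trees, and the formulas show that the property passes
  to products.\<close>

subsection \<open>Scalar multiples and bilinear extension\<close>

lemma lookup_scal [simp]: "Poly_Mapping.lookup (scal k p) x = k * Poly_Mapping.lookup p x"
  unfolding scal_def by transfer (simp add: when_def)

lemma keys_scal: "Poly_Mapping.keys (scal k p) \<subseteq> Poly_Mapping.keys p"
  by (auto simp: in_keys_iff)

lemma scal_diff: "scal k (p - q) = scal k p - scal k q"
  by (rule poly_mapping_eqI) (simp add: lookup_minus algebra_simps)

lemma scal_add_left: "scal (a + b) p = scal a p + scal b p"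
  by (rule poly_mapping_eqI) (simp add: lookup_add algebra_simps)

lemma scal_scal: "scal a (scal b p) = scal (a * b) p"
  by (rule poly_mapping_eqI) (simp add: algebra_simps)

lemma scal_0_left [simp]: "scal 0 p = 0"
  by (rule poly_mapping_eqI) simp

lemma scal_1 [simp]: "scal 1 p = p"
  by (rule poly_mapping_eqI) simp

lemma scal_0_right [simp]: "scal k 0 = 0"
  by (rule poly_mapping_eqI) simp

lemma scal_sum: "scal k (sum f A) = (\<Sum>i\<in>A. scal k (f i))"
  by (rule poly_mapping_eqI) (simp add: lookup_sum sum_distrib_left)

lemma scal_single: "scal k (Poly_Mapping.single x c) = Poly_Mapping.single x (k * c)"
  unfolding scal_def by simp

lemma sum_scal_single_keys:
  "(\<Sum>u\<in>Poly_Mapping.keys p. scal (Poly_Mapping.lookup p u) (Poly_Mapping.single u 1)) = p"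
  by (rule poly_mapping_eqI) (simp add: scal_single lookup_sum lookup_single when_def in_keys_iff)

lemma bil_eq_sum_scal: "bil f p q = (\<Sum>u\<in>Poly_Mapping.keys p. \<Sum>v\<in>Poly_Mapping.keys q.
    scal (Poly_Mapping.lookup p u * Poly_Mapping.lookup q v) (f u v))"
  unfolding bil_def scal_def by simp

lemma bil_eq_sum_superset:
  assumes "finite A" "Poly_Mapping.keys p \<subseteq> A" "finite B" "Poly_Mapping.keys q \<subseteq> B"
  shows "bil f p q = (\<Sum>u\<in>A. \<Sum>v\<in>B. scal (Poly_Mapping.lookup p u * Poly_Mapping.lookup q v) (f u v))"
  unfolding bil_eq_sum_scal
proof (rule sum.mono_neutral_cong_left)
  fix u assume "u \<in> Poly_Mapping.keys p"
  show "(\<Sum>v\<in>Poly_Mapping.keys q. scal (Poly_Mapping.lookup p u * Poly_Mapping.lookup q v) (f u v))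
    = (\<Sum>v\<in>B. scal (Poly_Mapping.lookup p u * Poly_Mapping.lookup q v) (f u v))"
    by (rule sum.mono_neutral_left) (use assms in \<open>auto simp: in_keys_iff\<close>)
qed (use assms in \<open>auto simp: in_keys_iff\<close>)

lemma bil_add_left: "bil f (p + p') q = bil f p q + bil f p' q"
proof -
  let ?A = "Poly_Mapping.keys p \<union> Poly_Mapping.keys p'" and ?B = "Poly_Mapping.keys q"
  have "Poly_Mapping.keys (p + p') \<subseteq> ?A"
    by (rule keys_add)
  then show ?thesis
    by (simp add: bil_eq_sum_superset[of ?A _ ?B] lookup_add distrib_right scal_add_left
        sum.distrib)
qed

lemma bil_add_right: "bil f p (q + q') = bil f p q + bil f p q'"
proof -
  let ?A = "Poly_Mapping.keys p" and ?B = "Poly_Mapping.keys q \<union> Poly_Mapping.keys q'"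
  have "Poly_Mapping.keys (q + q') \<subseteq> ?B"
    by (rule keys_add)
  then show ?thesis
    by (simp add: bil_eq_sum_superset[of ?A _ ?B] lookup_add distrib_left scal_add_left
        sum.distrib)
qed

lemma bil_scal_left: "bil f (scal k p) q = scal k (bil f p q)"
proof -
  have "bil f (scal k p) q = (\<Sum>u\<in>Poly_Mapping.keys p. \<Sum>v\<in>Poly_Mapping.keys q.
      scal (Poly_Mapping.lookup (scal k p) u * Poly_Mapping.lookup q v) (f u v))"
    by (rule bil_eq_sum_superset) (auto simp: keys_scal[THEN subsetD])
  then show ?thesis
    by (simp add: bil_eq_sum_scal[of f p] scal_sum scal_scal mult.assoc)
qed

lemma bil_scal_right: "bil f p (scal k q) = scal k (bil f p q)"
proof -
  have "bil f p (scal k q) = (\<Sum>u\<in>Poly_Mapping.keys p. \<Sum>v\<in>Poly_Mapping.keys q.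
      scal (Poly_Mapping.lookup p u * Poly_Mapping.lookup (scal k q) v) (f u v))"
    by (rule bil_eq_sum_superset) (auto simp: keys_scal[THEN subsetD])
  then show ?thesis
    by (simp add: bil_eq_sum_scal[of f p] scal_sum scal_scal algebra_simps)
qed

lemma bil_0_left [simp]: "bil f 0 q = 0"
  by (simp add: bil_def)

lemma bil_0_right [simp]: "bil f p 0 = 0"
  by (simp add: bil_def)

lemma bil_sum_left: "bil f (sum P I) q = (\<Sum>i\<in>I. bil f (P i) q)"
  by (induction I rule: infinite_finite_induct) (auto simp: bil_add_left)

lemma bil_sum_right: "bil f p (sum Q I) = (\<Sum>i\<in>I. bil f p (Q i))"
  by (induction I rule: infinite_finite_induct) (auto simp: bil_add_right)

lemma bil_single_single:
  "bil f (Poly_Mapping.single x a) (Poly_Mapping.single y b) = scal (a * b) (f x y)"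
  by (cases "a = 0"; cases "b = 0") (simp_all add: bil_eq_sum_scal)

lemma bil_cong:
  "(\<And>u v. u \<in> Poly_Mapping.keys p \<Longrightarrow> v \<in> Poly_Mapping.keys q \<Longrightarrow> f u v = g u v)
   \<Longrightarrow> bil f p q = bil g p q"
  unfolding bil_eq_sum_scal by (intro sum.cong refl) auto

lemma bil_eq_0I:
  "(\<And>u v. u \<in> Poly_Mapping.keys p \<Longrightarrow> v \<in> Poly_Mapping.keys q \<Longrightarrow> f u v = 0)
   \<Longrightarrow> bil f p q = 0"
  unfolding bil_eq_sum_scal by simp

lemma keys_bil:
  "Poly_Mapping.keys (bil f p q) \<subseteq>
     (\<Union>u\<in>Poly_Mapping.keys p. \<Union>v\<in>Poly_Mapping.keys q. Poly_Mapping.keys (f u v))"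
  unfolding bil_eq_sum_scal using keys_scal
  by (fastforce dest!: keys_sum[THEN subsetD])

lemma tens_eq_bil: "tens p q = bil (\<lambda>u v. Poly_Mapping.single (u, v) 1) p q"
  unfolding tens_def bil_eq_sum_scal by (simp add: scal_single)

lemma tens_0_right [simp]: "tens p 0 = 0"
  by (simp add: tens_eq_bil)

lemma tens_add_left: "tens (p + p') q = tens p q + tens p' q"
  by (simp add: tens_eq_bil bil_add_left)

lemma tens_add_right: "tens p (q + q') = tens p q + tens p q'"
  by (simp add: tens_eq_bil bil_add_right)

lemma tens_scal_left: "tens (scal k p) q = scal k (tens p q)"
  by (simp add: tens_eq_bil bil_scal_left)

lemma tens_scal_right: "tens p (scal k q) = scal k (tens p q)"
  by (simp add: tens_eq_bil bil_scal_right)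

lemma tens_sum_left: "tens (sum P I) q = (\<Sum>i\<in>I. tens (P i) q)"
  by (simp add: tens_eq_bil bil_sum_left)

lemma tens_sum_right: "tens p (sum Q I) = (\<Sum>i\<in>I. tens p (Q i))"
  by (simp add: tens_eq_bil bil_sum_right)

lemma keys_tens: "Poly_Mapping.keys (tens p q) \<subseteq> Poly_Mapping.keys p \<times> Poly_Mapping.keys q"
  using keys_bil[of "\<lambda>u v. Poly_Mapping.single (u, v) 1" p q] unfolding tens_eq_bil by auto

lemma bil_tens_tens:
  assumes "\<And>u v u' v'. u \<in> Poly_Mapping.keys p \<Longrightarrow> v \<in> Poly_Mapping.keys q \<Longrightarrow>
     u' \<in> Poly_Mapping.keys p' \<Longrightarrow> v' \<in> Poly_Mapping.keys q' \<Longrightarrow>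
     f (u, v) (u', v') = tens (g u u') (h v v')"
  shows "bil f (tens p q) (tens p' q') = tens (bil g p p') (bil h q q')"
proof -
  let ?Kp = "Poly_Mapping.keys p" and ?Kq = "Poly_Mapping.keys q"
  let ?Kp' = "Poly_Mapping.keys p'" and ?Kq' = "Poly_Mapping.keys q'"
  let ?lp = "Poly_Mapping.lookup p" and ?lq = "Poly_Mapping.lookup q"
  let ?lp' = "Poly_Mapping.lookup p'" and ?lq' = "Poly_Mapping.lookup q'"
  have "bil f (tens p q) (tens p' q') = (\<Sum>u\<in>?Kp. \<Sum>v\<in>?Kq. \<Sum>u'\<in>?Kp'. \<Sum>v'\<in>?Kq'.
      scal (?lp u * ?lq v * (?lp' u' * ?lq' v')) (f (u, v) (u', v')))"
    by (simp only: tens_def bil_sum_left, simp only: bil_sum_right bil_single_single)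
  also have "\<dots> = (\<Sum>u\<in>?Kp. \<Sum>v\<in>?Kq. \<Sum>u'\<in>?Kp'. \<Sum>v'\<in>?Kq'.
      scal (?lp u * ?lp' u') (scal (?lq v * ?lq' v') (tens (g u u') (h v v'))))"
    by (intro sum.cong refl) (simp only: assms scal_scal ac_simps)
  also have "\<dots> = (\<Sum>u\<in>?Kp. \<Sum>u'\<in>?Kp'. \<Sum>v\<in>?Kq. \<Sum>v'\<in>?Kq'.
      scal (?lp u * ?lp' u') (scal (?lq v * ?lq' v') (tens (g u u') (h v v'))))"
    by (rule sum.cong[OF refl], rule sum.swap)
  also have "\<dots> = tens (bil g p p') (bil h q q')"
    by (simp only: bil_eq_sum_scal tens_sum_left tens_scal_left,
        simp only: tens_sum_right tens_scal_right scal_sum)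
  finally show ?thesis .
qed

lemma keys_bar [simp]: "Poly_Mapping.keys (bar :: 'k::field lc) = {Leaf}"
  by (simp add: bar_def)

lemma lookup_bar_Leaf [simp]: "Poly_Mapping.lookup (bar :: 'k::field lc) Leaf = 1"
  by (simp add: bar_def)

lemma Aplus_keys_not_Leaf: "Aplus x \<Longrightarrow> u \<in> Poly_Mapping.keys x \<Longrightarrow> u \<noteq> Leaf"
  by (simp add: Aplus_def)

lemma Aplus_single: "reduced u \<Longrightarrow> u \<noteq> Leaf \<Longrightarrow> Aplus (Poly_Mapping.single u (1::'k::field))"
  by (simp add: Aplus_def)

lemma tri_Star_Leaf_right [simp]: "tri Star x Leaf = Poly_Mapping.single x 1"
  by (cases x) simp_all

lemma tri_Prec_Leaf_right: "x \<noteq> Leaf \<Longrightarrow> tri Prec x Leaf = Poly_Mapping.single x 1"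
  by (cases x) simp_all

lemma tri_Dot_Leaf_right [simp]: "tri Dot x Leaf = 0"
  by (cases x) simp_all

lemma tri_Succ_Leaf_right: "x \<noteq> Leaf \<Longrightarrow> tri Succ x Leaf = 0"
  by (cases x) simp_all

lemma bil_bar_right:
  "bil f p bar = (\<Sum>u\<in>Poly_Mapping.keys p. scal (Poly_Mapping.lookup p u) (f u Leaf))"
  by (simp add: bil_eq_sum_scal)

lemma bil_bar_left:
  "bil f bar q = (\<Sum>v\<in>Poly_Mapping.keys q. scal (Poly_Mapping.lookup q v) (f Leaf v))"
  by (simp add: bil_eq_sum_scal)

lemma aop_single_single:
  "aop r (Poly_Mapping.single x 1) (Poly_Mapping.single y 1) = (tri r x y :: 'k::field lc)"
  by (simp add: aop_def bil_single_single)

lemma aop_Star_bar_right [simp]: "aop Star x bar = x"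
  by (simp add: aop_def bil_bar_right sum_scal_single_keys)

lemma aop_Star_bar_left [simp]: "aop Star bar y = y"
  by (simp add: aop_def bil_bar_left sum_scal_single_keys)

lemma aop_Succ_bar_left [simp]: "aop Succ bar y = y"
  by (simp add: aop_def bil_bar_left sum_scal_single_keys)

lemma aop_Prec_bar_left [simp]: "aop Prec bar y = 0"
  by (simp add: aop_def bil_bar_left)

lemma aop_Dot_bar_left [simp]: "aop Dot bar y = 0"
  by (simp add: aop_def bil_bar_left)

lemma aop_Dot_bar_right [simp]: "aop Dot x bar = 0"
  by (simp add: aop_def bil_bar_right)

lemma aop_Prec_bar_right: "Aplus x \<Longrightarrow> aop Prec x bar = x"
  unfolding aop_def bil_bar_right
  by (subst (2) sum_scal_single_keys[symmetric], rule sum.cong)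
    (auto simp: tri_Prec_Leaf_right Aplus_keys_not_Leaf)

lemma aop_Succ_bar_right: "Aplus x \<Longrightarrow> aop Succ x bar = 0"
  unfolding aop_def bil_bar_right
  by (rule sum.neutral) (auto simp: tri_Succ_Leaf_right Aplus_keys_not_Leaf)

lemma Leaf_notin_keys_graft: "Leaf \<notin> Poly_Mapping.keys (graft pre c post)"
  unfolding graft_def by (auto dest!: keys_sum[THEN subsetD] split: if_splits)

lemma Leaf_notin_keys_tri:
  assumes "u \<noteq> Leaf \<or> v \<noteq> Leaf"
  shows "Leaf \<notin> Poly_Mapping.keys (tri r u v)"
proof (cases "u = Leaf \<or> v = Leaf")
  case True
  with assms show ?thesis
    by (cases r; cases u; cases v) auto
next
  case False
  then obtain xs ys where u: "u = Node xs" and v: "v = Node ys"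
    by (cases u; cases v) auto
  have products: "Leaf \<notin> Poly_Mapping.keys (tri r' u v)" if "r' \<noteq> Star" for r'
    using that by (cases r') (auto simp: u v Leaf_notin_keys_graft)
  have star: "tri Star u v = tri Prec u v + tri Dot u v + tri Succ u v"
    by (simp add: u v)
  have "Leaf \<notin> Poly_Mapping.keys (tri Star u v)"
    unfolding star using products[of Prec] products[of Dot] products[of Succ]
      keys_add[of "tri Prec u v + tri Dot u v" "tri Succ u v"]
      keys_add[of "tri Prec u v" "tri Dot u v"]
    by blast
  with products show ?thesis
    by (cases "r = Star") auto
qed

subsection \<open>The subspace \<open>\<A>\<^sup>+ \<otimes> \<A>\<^sup>+\<close>\<close>

text \<open>Elements of \<open>\<A>\<^sup>+ \<otimes> \<A>\<^sup>+\<close>.\<close>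

definition proper_tensor :: "'k::field tc \<Rightarrow> bool" where
  "proper_tensor T \<longleftrightarrow> (\<forall>(u, v)\<in>Poly_Mapping.keys T. u \<noteq> Leaf \<and> v \<noteq> Leaf)"

lemma proper_tensor_0 [simp]: "proper_tensor 0"
  by (simp add: proper_tensor_def)

lemma proper_tensor_add: "proper_tensor P \<Longrightarrow> proper_tensor Q \<Longrightarrow> proper_tensor (P + Q)"
  unfolding proper_tensor_def using keys_add[of P Q] by blast

lemma proper_tensor_scal: "proper_tensor P \<Longrightarrow> proper_tensor (scal k P)"
  unfolding proper_tensor_def using keys_scal[of k P] by blast

lemma proper_tensor_sum: "(\<And>i. i \<in> I \<Longrightarrow> proper_tensor (P i)) \<Longrightarrow> proper_tensor (sum P I)"
  by (induction I rule: infinite_finite_induct) (auto intro: proper_tensor_add)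

lemma proper_tensor_tens:
  assumes "Leaf \<notin> Poly_Mapping.keys p" "Leaf \<notin> Poly_Mapping.keys q"
  shows "proper_tensor (tens p q)"
  unfolding proper_tensor_def using assms keys_tens[of p q] by blast

lemma proper_tensor_tens_Aplus: "Aplus x \<Longrightarrow> Aplus y \<Longrightarrow> proper_tensor (tens x y)"
  by (rule proper_tensor_tens) (auto simp: Aplus_def)

lemma proper_tensor_tri2:
  assumes "a \<noteq> Leaf \<or> c \<noteq> Leaf" "b \<noteq> Leaf \<or> d \<noteq> Leaf"
  shows "proper_tensor (tri2 r (a, b) (c, d))"
  using assms by (auto simp: tri2_def intro!: proper_tensor_tens Leaf_notin_keys_tri)

lemma proper_tensor_tprod:
  assumes "proper_tensor P \<or> proper_tensor Q"
  shows "proper_tensor (tprod r P Q)"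
proof -
  have "proper_tensor (tri2 r z w)"
    if "z \<in> Poly_Mapping.keys P" "w \<in> Poly_Mapping.keys Q" for z w
  proof -
    obtain a b c d where zw: "z = (a, b)" "w = (c, d)"
      by (cases z, cases w)
    have "a \<noteq> Leaf \<and> b \<noteq> Leaf \<or> c \<noteq> Leaf \<and> d \<noteq> Leaf"
      using assms that unfolding zw proper_tensor_def by auto
    then show ?thesis
      unfolding zw by (intro proper_tensor_tri2) auto
  qed
  then show ?thesis
    unfolding tprod_def bil_eq_sum_scal by (intro proper_tensor_sum proper_tensor_scal)
qed

lemma tprod_bar_tens_bar_tens:
  assumes "Aplus x" "Aplus y"
  shows "tprod r (tens bar x) (tens bar y) = tens bar (aop r x y)"
proof -
  have "bil (tri2 r) (tens bar x) (tens bar y) = tens (bil (tri Star) bar bar) (bil (tri r) x y)"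
    by (rule bil_tens_tens) (use assms in \<open>auto simp: tri2_def Aplus_keys_not_Leaf\<close>)
  then show ?thesis
    by (simp add: tprod_def aop_def[symmetric])
qed

lemma tprod_tens_bar_tens_bar: "tprod r (tens x bar) (tens y bar) = tens (aop r x y) bar"
proof -
  have "bil (tri2 r) (tens x bar) (tens y bar) = tens (bil (tri r) x y) (bil (tri Star) bar bar)"
    by (rule bil_tens_tens) (auto simp: tri2_def bar_def)
  then show ?thesis
    by (simp add: tprod_def aop_def[symmetric])
qed

lemma tprod_bar_tens_tens_bar:
  assumes "Aplus x"
  shows "tprod r (tens bar x) (tens y bar) = tens y (aop r x bar)"
proof -
  have "bil (tri2 r) (tens bar x) (tens y bar) = tens (bil (tri Star) bar y) (bil (tri r) x bar)"
    by (rule bil_tens_tens) (use assms in \<open>auto simp: tri2_def Aplus_keys_not_Leaf\<close>)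
  then show ?thesis
    by (simp add: tprod_def aop_def[symmetric])
qed

lemma tprod_tens_bar_bar_tens:
  assumes "Aplus y"
  shows "tprod r (tens x bar) (tens bar y) = tens x (aop r bar y)"
proof -
  have "bil (tri2 r) (tens x bar) (tens bar y) = tens (bil (tri Star) x bar) (bil (tri r) bar y)"
    by (rule bil_tens_tens) (use assms in \<open>auto simp: tri2_def Aplus_keys_not_Leaf\<close>)
  then show ?thesis
    by (simp add: tprod_def aop_def[symmetric])
qed

lemma keys_tens_barE:
  assumes "z \<in> Poly_Mapping.keys (tens x bar)"
  obtains a where "z = (a, Leaf)"
  using assms keys_tens[of x bar] by auto

lemma keys_proper_tensorE:
  assumes "proper_tensor T" "z \<in> Poly_Mapping.keys T"
  obtains a b where "z = (a, b)" "a \<noteq> Leaf" "b \<noteq> Leaf"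
  using assms by (cases z) (auto simp: proper_tensor_def)

text \<open>In the next four lemmas the second tensor factors are | and some \<open>b \<noteq> |\<close>, so
  they are multiplied by the rules \<open>| \<prec> b = | \<cdot> b = 0\<close>, \<open>| \<succ> b = b\<close> and their mirror images.\<close>

lemma tprod_tens_bar_proper_tensor:
  assumes "proper_tensor T" "r \<in> {Prec, Dot}"
  shows "tprod r (tens x bar) T = 0"
  unfolding tprod_def
proof (rule bil_eq_0I)
  fix z w assume z: "z \<in> Poly_Mapping.keys (tens x bar)" and w: "w \<in> Poly_Mapping.keys T"
  obtain a where "z = (a, Leaf)"
    using z by (rule keys_tens_barE)
  moreover obtain c d where "w = (c, d)" "c \<noteq> Leaf" "d \<noteq> Leaf"
    using assms(1) w by (rule keys_proper_tensorE)
  ultimately show "tri2 r z w = 0"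
    using assms by (auto simp: tri2_def)
qed

lemma tprod_Succ_tens_bar_proper_tensor:
  assumes "proper_tensor T"
  shows "tprod Succ (tens x bar) T = tprod Star (tens x bar) T"
  unfolding tprod_def
proof (rule bil_cong)
  fix z w assume z: "z \<in> Poly_Mapping.keys (tens x bar)" and w: "w \<in> Poly_Mapping.keys T"
  obtain a where "z = (a, Leaf)"
    using z by (rule keys_tens_barE)
  moreover obtain c d where "w = (c, d)" "c \<noteq> Leaf" "d \<noteq> Leaf"
    using assms(1) w by (rule keys_proper_tensorE)
  ultimately show "tri2 Succ z w = tri2 Star z w"
    using assms by (auto simp: tri2_def)
qed

lemma tprod_proper_tensor_tens_bar:
  assumes "proper_tensor T" "r \<in> {Dot, Succ}"
  shows "tprod r T (tens y bar) = 0"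
  unfolding tprod_def
proof (rule bil_eq_0I)
  fix w z assume w: "w \<in> Poly_Mapping.keys T" and z: "z \<in> Poly_Mapping.keys (tens y bar)"
  obtain a where "z = (a, Leaf)"
    using z by (rule keys_tens_barE)
  moreover obtain c d where "w = (c, d)" "c \<noteq> Leaf" "d \<noteq> Leaf"
    using assms(1) w by (rule keys_proper_tensorE)
  ultimately show "tri2 r w z = 0"
    using assms by (auto simp: tri2_def tri_Succ_Leaf_right)
qed

lemma tprod_Prec_proper_tensor_tens_bar:
  assumes "proper_tensor T"
  shows "tprod Prec T (tens y bar) = tprod Star T (tens y bar)"
  unfolding tprod_def
proof (rule bil_cong)
  fix w z assume w: "w \<in> Poly_Mapping.keys T" and z: "z \<in> Poly_Mapping.keys (tens y bar)"
  obtain a where "z = (a, Leaf)"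
    using z by (rule keys_tens_barE)
  moreover obtain c d where "w = (c, d)" "c \<noteq> Leaf" "d \<noteq> Leaf"
    using assms(1) w by (rule keys_proper_tensorE)
  ultimately show "tri2 Prec w z = tri2 Star w z"
    using assms by (auto simp: tri2_def tri_Prec_Leaf_right)
qed

lemma tprod_add3_add3:
  "tprod r (A + B + C) (A' + B' + C') =
     tprod r A A' + tprod r A B' + tprod r A C' + tprod r B A' + tprod r B B' + tprod r B C'
     + tprod r C A' + tprod r C B' + tprod r C C'"
  by (simp only: tprod_def bil_add_left bil_add_right add_ac)

subsection \<open>Generation of reduced trees by Y\<close>

lemma length_le_size_list: "length xs \<le> size_list f xs"
  by (induction xs) auto

text \<open>The decompositions: \<open>| \<or> x = Y \<prec> x\<close>, \<open>x \<or> | = x \<succ> Y\<close>,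
  \<open>x \<or> y = (x \<or> |) \<prec> y\<close>, and
  \<open>x\<^sub>0 \<or> \<dots> \<or> x\<^sub>k = (x\<^sub>0 \<or> \<dots> \<or> x\<^sub>k\<^sub>-\<^sub>1) \<cdot> (| \<or> x\<^sub>k)\<close> for \<open>k \<ge> 2\<close>.\<close>

lemma reduced_tree_eq_tri:
  assumes "reduced u" "u \<noteq> Leaf" "u \<noteq> Y"
  obtains r x y where "r \<in> {Prec, Dot, Succ}"
    "reduced x" "x \<noteq> Leaf" "size x < size u" "reduced y" "y \<noteq> Leaf" "size y < size u"
    "tri r x y = (Poly_Mapping.single u 1 :: 'k::field lc)"
proof -
  obtain xs where u: "u = Node xs" and len: "2 \<le> length xs" and red: "\<forall>x\<in>set xs. reduced x"
    using assms by (cases u) auto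
  consider (two) x0 x1 where "xs = [x0, x1]" | (more) ys xk where "xs = ys @ [xk]" "2 \<le> length ys"
  proof (cases "length xs = 2")
    case True
    then show ?thesis
      using that(1) by (metis One_nat_def Suc_1 length_0_conv length_Suc_conv)
  next
    case False
    with len show ?thesis
      using that(2) by (cases xs rule: rev_cases) auto
  qed
  then show ?thesis
  proof cases
    case two
    show ?thesis
    proof (cases "x0 = Leaf")
      case True
      then have "x1 \<noteq> Leaf"
        using assms(3) u two by auto
      then have "tri Prec Y x1 = (Poly_Mapping.single u 1 :: 'k lc)"
        by (cases x1) (simp_all add: u two True graft_def)
      then show ?thesis
        using that[of Prec Y x1] \<open>x1 \<noteq> Leaf\<close> red u two True by (cases x1) auto
    next
      case False
      show ?thesis
      proof (cases "x1 = Leaf")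
        case True
        have "tri Succ x0 Y = (Poly_Mapping.single u 1 :: 'k lc)"
          using False by (cases x0) (simp_all add: u two True graft_def)
        then show ?thesis
          using that[of Succ x0 Y] False red u two True by (cases x0) auto
      next
        case x1: False
        have "tri Prec (Node [x0, Leaf]) x1 = (Poly_Mapping.single u 1 :: 'k lc)"
          using x1 by (cases x1) (simp_all add: u two graft_def)
        then show ?thesis
          using that[of Prec "Node [x0, Leaf]" x1] False x1 red u two by (cases x1) auto
      qed
    qed
  next
    case more
    then have ys: "butlast ys @ [last ys, xk] = ys @ [xk]"
      by (metis append_butlast_last_id append.assoc append_Cons append_Nil list.size(3)
          not_numeral_le_zero)
    have "tri Dot (Node ys) (Node [Leaf, xk]) = (Poly_Mapping.single u 1 :: 'k lc)"
      using more by (auto simp: u graft_def ys)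
    moreover have "size (Node [Leaf, xk]) < size u"
      using more length_le_size_list[of ys size] by (simp add: u)
    ultimately show ?thesis
      using that[of Dot "Node ys" "Node [Leaf, xk]"] more red u by auto
  qed
qed

subsection \<open>The reduced coproduct\<close>

context
  fixes D :: "'k::field lc \<Rightarrow> 'k tc"
  assumes D: "is_Delta D"
begin

lemma Delta_add: "D (p + q) = D p + D q"
  using D by (simp add: is_Delta_def)

lemma Delta_scal: "D (scal k p) = scal k (D p)"
  using D by (simp add: is_Delta_def)

lemma Delta_aop:
  "r \<in> {Prec, Dot, Succ} \<Longrightarrow> Aplus p \<Longrightarrow> Aplus q \<Longrightarrow> D (aop r p q) = tprod r (D p) (D q)"
  using D by (auto simp: is_Delta_def)

lemma Dtil_add: "Dtil D (p + q) = Dtil D p + Dtil D q"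
  by (simp add: Dtil_def Delta_add tens_add_left tens_add_right algebra_simps)

lemma Dtil_scal: "Dtil D (scal k p) = scal k (Dtil D p)"
  by (simp add: Dtil_def Delta_scal tens_scal_left tens_scal_right scal_diff)

lemma Dtil_0: "Dtil D 0 = 0"
  using Dtil_add[of 0 0] by simp

lemma Dtil_sum: "Dtil D (sum P I) = (\<Sum>i\<in>I. Dtil D (P i))"
  by (induction I rule: infinite_finite_induct) (simp_all add: Dtil_add Dtil_0)

lemma Dtil_Y: "Dtil D (Poly_Mapping.single Y 1) = 0"
  using D by (simp add: Dtil_def is_Delta_def)

lemma Delta_aop_expand:
  assumes "r \<in> {Prec, Dot, Succ}" "Aplus x" "Aplus y"
  shows "D (aop r x y) =
     tprod r (Dtil D x) (Dtil D y) + tprod r (Dtil D x) (tens bar y) + tprod r (Dtil D x) (tens y bar)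
     + tprod r (tens bar x) (Dtil D y) + tprod r (tens bar x) (tens bar y)
     + tprod r (tens bar x) (tens y bar)
     + tprod r (tens x bar) (Dtil D y) + tprod r (tens x bar) (tens bar y)
     + tprod r (tens x bar) (tens y bar)"
proof -
  have "D z = Dtil D z + tens bar z + tens z bar" for z
    by (simp add: Dtil_def)
  then show ?thesis
    using Delta_aop[OF assms] by (simp only: tprod_add3_add3)
qed

context
  fixes x y :: "'k lc"
  assumes x: "Aplus x" and y: "Aplus y"
    and proper_x: "proper_tensor (Dtil D x)" and proper_y: "proper_tensor (Dtil D y)"
begin

lemma Dtil_aop_Dot:
  "Dtil D (aop Dot x y) =
     tprod Dot (Dtil D x) (Dtil D y) + tprod Dot (tens bar x) (Dtil D y)
     + tprod Dot (Dtil D x) (tens bar y)"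
  unfolding Dtil_def[of D "aop Dot x y"] Delta_aop_expand[of Dot, OF _ x y, simplified]
  using x y proper_x proper_y
  by (simp add: tprod_bar_tens_bar_tens tprod_tens_bar_tens_bar tprod_bar_tens_tens_bar
      tprod_tens_bar_bar_tens tprod_tens_bar_proper_tensor tprod_proper_tensor_tens_bar)

lemma Dtil_aop_Prec:
  "Dtil D (aop Prec x y) =
     tens y x + tprod Prec (tens bar x) (Dtil D y) + tprod Prec (Dtil D x) (tens bar y)
     + tprod Star (Dtil D x) (tens y bar) + tprod Prec (Dtil D x) (Dtil D y)"
  unfolding Dtil_def[of D "aop Prec x y"] Delta_aop_expand[of Prec, OF _ x y, simplified]
  using x y proper_x proper_y
  by (simp add: tprod_bar_tens_bar_tens tprod_tens_bar_tens_bar tprod_bar_tens_tens_bar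
      tprod_tens_bar_bar_tens tprod_tens_bar_proper_tensor tprod_Prec_proper_tensor_tens_bar
      aop_Prec_bar_right algebra_simps)

lemma Dtil_aop_Succ:
  "Dtil D (aop Succ x y) =
     tens x y + tprod Succ (tens bar x) (Dtil D y) + tprod Star (tens x bar) (Dtil D y)
     + tprod Succ (Dtil D x) (tens bar y) + tprod Succ (Dtil D x) (Dtil D y)"
  unfolding Dtil_def[of D "aop Succ x y"] Delta_aop_expand[of Succ, OF _ x y, simplified]
  using x y proper_x proper_y
  by (simp add: tprod_bar_tens_bar_tens tprod_tens_bar_tens_bar tprod_bar_tens_tens_bar
      tprod_tens_bar_bar_tens tprod_Succ_tens_bar_proper_tensor tprod_proper_tensor_tens_bar
      aop_Succ_bar_right algebra_simps)

lemma proper_tensor_Dtil_aop: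
  assumes "r \<in> {Prec, Dot, Succ}"
  shows "proper_tensor (Dtil D (aop r x y))"
  using assms x y proper_x proper_y
  by (auto simp: Dtil_aop_Dot Dtil_aop_Prec Dtil_aop_Succ
      intro!: proper_tensor_add proper_tensor_tprod proper_tensor_tens_Aplus)

end

lemma proper_tensor_Dtil_tree:
  "reduced u \<Longrightarrow> u \<noteq> Leaf \<Longrightarrow> proper_tensor (Dtil D (Poly_Mapping.single u 1))"
proof (induction u rule: measure_induct_rule[where f = size])
  case (less u)
  show ?case
  proof (cases "u = Y")
    case True
    then show ?thesis
      by (simp add: Dtil_Y)
  next
    case False
    obtain r x y where r: "r \<in> {Prec, Dot, Succ}"
      and x: "reduced x" "x \<noteq> Leaf" "size x < size u"
      and y: "reduced y" "y \<noteq> Leaf" "size y < size u"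
      and u: "tri r x y = (Poly_Mapping.single u 1 :: 'k lc)"
      using less.prems False by (rule reduced_tree_eq_tri)
    have "proper_tensor (Dtil D (aop r (Poly_Mapping.single x 1) (Poly_Mapping.single y 1)))"
      using r x y less.IH by (intro proper_tensor_Dtil_aop Aplus_single) simp_all
    then show ?thesis
      by (simp add: aop_single_single u)
  qed
qed

lemma proper_tensor_Dtil: "Aplus t \<Longrightarrow> proper_tensor (Dtil D t)"
proof -
  assume t: "Aplus t"
  have "Dtil D t = (\<Sum>u\<in>Poly_Mapping.keys t.
      scal (Poly_Mapping.lookup t u) (Dtil D (Poly_Mapping.single u 1)))"
    by (subst sum_scal_single_keys[symmetric]) (simp add: Dtil_sum Dtil_scal)
  also have "proper_tensor \<dots>"
    using t by (intro proper_tensor_sum proper_tensor_scal proper_tensor_Dtil_tree)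
      (auto simp: Aplus_def)
  finally show ?thesis .
qed

end

theorem mainTheorem5:
  fixes D :: "'k::field lc \<Rightarrow> 'k tc" and t s :: "'k lc"
  assumes "is_Delta D" and "Aplus t" and "Aplus s"
  shows "Dtil D (aop Dot t s) =
           tprod Dot (Dtil D t) (Dtil D s) + tprod Dot (tens bar t) (Dtil D s)
           + tprod Dot (Dtil D t) (tens bar s)
     \<and> Dtil D (aop Prec t s) =
           tens s t + tprod Prec (tens bar t) (Dtil D s) + tprod Prec (Dtil D t) (tens bar s)
           + tprod Star (Dtil D t) (tens s bar) + tprod Prec (Dtil D t) (Dtil D s)
     \<and> Dtil D (aop Succ t s) =
           tens t s + tprod Succ (tens bar t) (Dtil D s) + tprod Star (tens t bar) (Dtil D s)
           + tprod Succ (Dtil D t) (tens bar s) + tprod Succ (Dtil D t) (Dtil D s)"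
proof -
  note proper = proper_tensor_Dtil[OF assms(1,2)] proper_tensor_Dtil[OF assms(1,3)]
  show ?thesis
    using Dtil_aop_Dot[OF assms proper] Dtil_aop_Prec[OF assms proper]
      Dtil_aop_Succ[OF assms proper]
    by blast
qed

end
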